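(* Let $p,q,r\in[1,\infty)$ with $1/r=1/p+1/q$, let $\alpha>0$, $\phi(s)\equiv s^\alpha$, $\omega_1(t)\equiv t^{-n/p}$, $\omega_2(t)\equiv t^{-n/q}$, $\omega(t)\equiv t^{-n/r}$, and suppose every set $B\in\mathcal B$ is bounded in $X$. If $F_1\in e-(\mathcal B,\phi,\omega_1)-B^{p}(\Lambda\times X:\mathbb C)$ and $F_2\in e-(\mathcal B,\phi,\omega_2)-B^{q}(\Lambda\times X:Y)$, then the function $F(\mathbf t;x):=F_1(\mathbf t;x)F_2(\mathbf t;x)$, $\mathbf t\in\Lambda$, $x\in X$, belongs to $e-(\mathcal B,\phi,\omega)-B^{r}(\Lambda\times X:Y)$.
   Context: $X,Y$ are complex Banach spaces, $n\in\mathbb N$, $\emptyset\ne\Lambda\subseteq\mathbb R^n$ is Lebesgue measurable, $\mathcal B$ is a nonempty collection of nonempty subsets of $X$ whose union is $X$. For $t>0$, $\Lambda_t:=\Lambda\cap[-t,t]^n$. A trigonometric polynomial is a finite sum $P(\mathbf t;x)=\sum_{l}e^{i\langle\lambda_l,\mathbf t\rangle}c_l(x)$ with $\lambda_l\in\mathbb R^n$ and $c_l:X\to Z$ ($Z$ the target space) continuous and bounded on bounded subsets of $X$. For a constant exponent $s\in[1,\infty)$, $\phi:[0,\infty)\to[0,\infty)$ and $\omega:(0,\infty)\to(0,\infty)$, a function $F:\Lambda\times X\to Z$ (each $F(\cdot;x)$ measurable) belongs to $e-(\mathcal B,\phi,\omega)-B^{s}(\Lambda\times X:Z)$ iff for each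 $B\in\mathcal B$ there is a sequence $(P_k)$ of trigonometric polynomials with $\lim_{k\to\infty}\limsup_{t\to\infty}\omega(t)\sup_{x\in B}\|\phi(\|F(\cdot;x)-P_k(\cdot;x)\|_Z)\|_{L^{s}(\Lambda_t)}=0$. *)

theory Defs
  imports "HOL-Analysis.Analysis"
begin

text \<open>Complex Banach spaces are the instances that are also of class banach.\<close>

class complex_normed_vector = real_normed_vector +
  fixes scaleC :: "complex \<Rightarrow> 'a \<Rightarrow> 'a"
  assumes scaleC_add_right: "scaleC a (x + y) = scaleC a x + scaleC a y"
    and scaleC_add_left: "scaleC (a + b) x = scaleC a x + scaleC b x"
    and scaleC_scaleC: "scaleC a (scaleC b x) = scaleC (a * b) x"
    and scaleC_one: "scaleC 1 x = x"
    and scaleC_of_real: "scaleC (of_real r) x = scaleR r x"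
    and norm_scaleC: "norm (scaleC a x) = cmod a * norm x"

instantiation complex :: complex_normed_vector
begin
definition scaleC_complex :: "complex \<Rightarrow> complex \<Rightarrow> complex" where
  "scaleC_complex a x = a * x"
instance
  by standard (auto simp: scaleC_complex_def algebra_simps norm_mult scaleR_conv_of_real)
end

definition trig_poly ::
  "(real^'n \<Rightarrow> 'x::real_normed_vector \<Rightarrow> 'z::complex_normed_vector) \<Rightarrow> bool" where
  "trig_poly P \<longleftrightarrow>
     (\<exists>L :: ((real^'n) \<times> ('x \<Rightarrow> 'z)) list.
        (\<forall>(lam, c) \<in> set L. continuous_on UNIV c \<and> (\<forall>B. bounded B \<longrightarrow> bounded (c ` B))) \<and>
        P = (\<lambda>t x. (\<Sum>(lam, c) \<leftarrow> L. scaleC (exp (\<i> * complex_of_real (lam \<bullet> t))) (c x))))"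

definition Lambda_t :: "(real^'n) set \<Rightarrow> real \<Rightarrow> (real^'n) set" where
  "Lambda_t Lam t = Lam \<inter> {v. \<forall>i. \<bar>v $ i\<bar> \<le> t}"

definition Lnorm :: "real \<Rightarrow> (real^'n) set \<Rightarrow> (real^'n \<Rightarrow> real) \<Rightarrow> ennreal" where
  "Lnorm s A g =
     (let I = (\<integral>\<^sup>+ v \<in> A. ennreal (\<bar>g v\<bar> powr s) \<partial>lebesgue)
      in if I = \<infinity> then \<infinity> else ennreal (enn2real I powr (1 / s)))"

definition e_Besicovitch ::
  "'x::real_normed_vector set set \<Rightarrow> (real \<Rightarrow> real) \<Rightarrow> (real \<Rightarrow> real) \<Rightarrow> real \<Rightarrow>
   (real^'n) set \<Rightarrow> (real^'n \<Rightarrow> 'x \<Rightarrow> 'z::complex_normed_vector) \<Rightarrow> bool" where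
  "e_Besicovitch BB phi omega s Lam F \<longleftrightarrow>
     (\<forall>x. (\<lambda>t. F t x) \<in> borel_measurable (lebesgue_on Lam)) \<and>
     (\<forall>B \<in> BB. \<exists>P :: nat \<Rightarrow> real^'n \<Rightarrow> 'x \<Rightarrow> 'z.
        (\<forall>k. trig_poly (P k)) \<and>
        (\<lambda>k. Limsup at_top (\<lambda>t::real. ennreal (omega t) *
               (SUP x \<in> B. Lnorm s (Lambda_t Lam t) (\<lambda>v. phi (norm (F v x - P k v x))))))
          \<longlonglongrightarrow> 0)"

end

theory Submission
  imports Defs
begin

text \<open>
  The approximants of \<open>F1 F2\<close> are the products \<open>P1\<^sub>k P2\<^sub>k\<close>, again trigonometric polynomials.
  With \<open>u\<^sub>i = |F\<^sub>i - P\<^sub>i\<^sub>k|\<close> one has \<open>|F1 F2 - P1\<^sub>k P2\<^sub>k| \<le> u\<^sub>1 |F2| + |F1| u\<^sub>2 + u\<^sub>1 u\<^sub>2\<close>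
  pointwise. Instead of Hoelder's inequality we apply, also pointwise, Young's inequality with a
  free weight \<open>l\<close>: \<open>(x y)\<^sup>r \<le> l\<^sup>-\<^sup>p x\<^sup>p + l\<^sup>q y\<^sup>q\<close> for \<open>1/r = 1/p + 1/q\<close>. Integrating over the window
  \<open>\<Lambda>\<^sub>t\<close> with weight \<open>t\<^sup>-\<^sup>n\<close>, the mean of \<open>|F1 F2 - P1\<^sub>k P2\<^sub>k|\<^sup>\<alpha>\<^sup>r\<close> is bounded by
  \<open>l\<^sup>-\<^sup>p\<close> times means of \<open>u\<^sub>i\<close>, which become small as \<open>k \<rightarrow> \<infinity>\<close>, plus \<open>l\<^sup>q\<close> times means of
  \<open>|F\<^sub>i|\<close>, which stay bounded because \<open>F\<^sub>i\<close> is close to a trigonometric polynomial, and these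
  are bounded on bounded sets. Choosing first \<open>l\<close> small and then \<open>k\<close> large proves the claim.
\<close>

lemma bounded_bilinear_scaleC:
  "bounded_bilinear (scaleC :: complex \<Rightarrow> 'a::complex_normed_vector \<Rightarrow> 'a)"
proof
  fix a a' :: complex and b b' :: 'a and r :: real
  show "scaleC (a + a') b = scaleC a b + scaleC a' b" by (rule scaleC_add_left)
  show "scaleC a (b + b') = scaleC a b + scaleC a b'" by (rule scaleC_add_right)
  show "scaleC (r *\<^sub>R a) b = r *\<^sub>R scaleC a b"
    by (simp add: scaleR_conv_of_real scaleC_scaleC[symmetric] scaleC_of_real)
  show "scaleC a (r *\<^sub>R b) = r *\<^sub>R scaleC a b"
    by (metis mult.commute scaleC_of_real scaleC_scaleC)
  show "\<exists>K. \<forall>a b. norm (scaleC a (b::'a)) \<le> norm a * norm b * K"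
    by (rule exI[of _ 1]) (simp add: norm_scaleC)
qed
lemmas scaleC_zero_left = bounded_bilinear.zero_left[OF bounded_bilinear_scaleC]
lemmas scaleC_zero_right = bounded_bilinear.zero_right[OF bounded_bilinear_scaleC]
lemmas scaleC_diff_left = bounded_bilinear.diff_left[OF bounded_bilinear_scaleC]
lemmas scaleC_diff_right = bounded_bilinear.diff_right[OF bounded_bilinear_scaleC]

lemma continuous_on_scaleC [continuous_intros]:
  "continuous_on S f \<Longrightarrow> continuous_on S g
    \<Longrightarrow> continuous_on S (\<lambda>x. scaleC (f x) (g x :: 'a::complex_normed_vector))"
  by (rule bounded_bilinear.continuous_on[OF bounded_bilinear_scaleC])

lemma norm_scaleC_diff_le:
  fixes a c :: complex and b d :: "'a::complex_normed_vector"
  shows "norm (scaleC a b - scaleC c d)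
    \<le> norm (a - c) * norm b + norm a * norm (b - d) + norm (a - c) * norm (b - d)"
proof -
  have "scaleC a b - scaleC c d = scaleC (a - c) b + scaleC a (b - d) - scaleC (a - c) (b - d)"
    by (simp add: scaleC_diff_left scaleC_diff_right algebra_simps)
  also have "norm \<dots> \<le> norm (scaleC (a - c) b) + norm (scaleC a (b - d)) + norm (scaleC (a - c) (b - d))"
    by (rule order_trans[OF norm_triangle_ineq4 add_right_mono[OF norm_triangle_ineq]])
  finally show ?thesis by (simp add: norm_scaleC)
qed

section \<open>Trigonometric polynomials\<close>

definition trig_sum ::
  "((real^'n) \<times> ('x \<Rightarrow> 'z)) list \<Rightarrow> real^'n \<Rightarrow> 'x \<Rightarrow> 'z::complex_normed_vector" where
  "trig_sum L t x = (\<Sum>(lam, c) \<leftarrow> L. scaleC (exp (\<i> * complex_of_real (lam \<bullet> t))) (c x))"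

lemma trig_sum_simps [simp]:
  "trig_sum [] t x = 0"
  "trig_sum ((lam, c) # L) t x = scaleC (exp (\<i> * complex_of_real (lam \<bullet> t))) (c x) + trig_sum L t x"
  "trig_sum (L @ L') t x = trig_sum L t x + trig_sum L' t x"
  by (simp_all add: trig_sum_def)

definition trig_coefficients ::
  "((real^'n) \<times> ('x::real_normed_vector \<Rightarrow> 'z::real_normed_vector)) list \<Rightarrow> bool" where
  "trig_coefficients L \<longleftrightarrow>
     (\<forall>(lam, c) \<in> set L. continuous_on UNIV c \<and> (\<forall>B. bounded B \<longrightarrow> bounded (c ` B)))"

lemma trig_coefficients_simps [simp]:
  "trig_coefficients []"
  "trig_coefficients ((lam, c) # L) \<longleftrightarrow>
     continuous_on UNIV c \<and> (\<forall>B. bounded B \<longrightarrow> bounded (c ` B)) \<and> trig_coefficients L"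
  by (simp_all add: trig_coefficients_def)

lemma trig_poly_iff_trig_sum: "trig_poly P \<longleftrightarrow> (\<exists>L. trig_coefficients L \<and> P = trig_sum L)"
  unfolding trig_poly_def trig_coefficients_def trig_sum_def[abs_def] by simp

lemma continuous_on_trig_sum: "continuous_on UNIV (\<lambda>t. trig_sum L t x)"
proof (induction L)
  case (Cons a L)
  then show ?case
    by (cases a) (simp, intro continuous_on_add continuous_on_scaleC continuous_on_exp
        continuous_on_mult_left continuous_on_of_real continuous_on_inner continuous_on_const
        continuous_on_id)
qed simp

lemma trig_poly_continuous: "trig_poly P \<Longrightarrow> continuous_on UNIV (\<lambda>t. P t x)"
  unfolding trig_poly_iff_trig_sum by (elim exE conjE) (simp add: continuous_on_trig_sum)

lemma trig_sum_bounded: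
  assumes "trig_coefficients L" and "bounded B"
  shows "\<exists>M. \<forall>t. \<forall>x\<in>B. norm (trig_sum L t x) \<le> M"
  using assms(1)
proof (induction L)
  case Nil
  show ?case by (intro exI[of _ 0]) simp
next
  case (Cons a L)
  obtain lam c where a: "a = (lam, c)" by fastforce
  obtain M where M: "\<forall>t. \<forall>x\<in>B. norm (trig_sum L t x) \<le> M"
    using Cons unfolding a by auto
  have "bounded (c ` B)"
    using Cons.prems assms(2) unfolding a by simp
  then obtain K where K: "\<forall>x\<in>B. norm (c x) \<le> K"
    unfolding bounded_iff by blast
  have "norm (trig_sum (a # L) t x) \<le> K + M" if "x \<in> B" for t x
  proof -
    have "norm (trig_sum (a # L) t x) \<le> norm (c x) + norm (trig_sum L t x)"
      using norm_triangle_ineq[of "scaleC (exp (\<i> * complex_of_real (lam \<bullet> t))) (c x)"]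
      by (simp add: a norm_scaleC)
    also have "\<dots> \<le> K + M"
      using K M that by (intro add_mono) auto
    finally show ?thesis .
  qed
  then show ?case by blast
qed

lemma trig_poly_bounded: "trig_poly P \<Longrightarrow> bounded B \<Longrightarrow> \<exists>M. \<forall>t. \<forall>x\<in>B. norm (P t x) \<le> M"
  unfolding trig_poly_iff_trig_sum by (elim exE conjE) (simp add: trig_sum_bounded)

lemma trig_sum_scaleC_term:
  fixes c :: "'x \<Rightarrow> complex"
  shows "scaleC (scaleC (exp (\<i> * complex_of_real (l \<bullet> t))) (c x)) (trig_sum L t x)
    = trig_sum (map (\<lambda>(l', c'). (l + l', \<lambda>x. scaleC (c x) (c' x))) L) t x"
proof (induction L)
  case (Cons a L)
  obtain l' c' where a: "a = (l', c')" by fastforce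
  have "exp (\<i> * complex_of_real ((l + l') \<bullet> t))
      = exp (\<i> * complex_of_real (l \<bullet> t)) * exp (\<i> * complex_of_real (l' \<bullet> t))"
    by (simp add: inner_add_left distrib_left exp_add)
  then show ?case
    using Cons by (simp add: a scaleC_add_right scaleC_complex_def scaleC_scaleC mult_ac)
qed (simp add: scaleC_zero_right)

definition trig_list_product ::
  "((real^'n) \<times> ('x \<Rightarrow> complex)) list \<Rightarrow> ((real^'n) \<times> ('x \<Rightarrow> 'z)) list
    \<Rightarrow> ((real^'n) \<times> ('x \<Rightarrow> 'z::complex_normed_vector)) list" where
  "trig_list_product L1 L2 =
     concat (map (\<lambda>(l, c). map (\<lambda>(l', c'). (l + l', \<lambda>x. scaleC (c x) (c' x))) L2) L1)"

lemma trig_sum_trig_list_product: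
  "trig_sum (trig_list_product L1 L2) t x = scaleC (trig_sum L1 t x) (trig_sum L2 t x)"
proof (induction L1)
  case (Cons a L1)
  obtain l c where a: "a = (l, c)" by fastforce
  show ?case
    using Cons by (simp add: a trig_list_product_def scaleC_add_left trig_sum_scaleC_term)
qed (simp add: trig_list_product_def scaleC_zero_left)

lemma bounded_image_scaleC:
  fixes c :: "'x \<Rightarrow> complex" and c' :: "'x \<Rightarrow> 'z::complex_normed_vector"
  assumes "bounded (c ` B)" "bounded (c' ` B)"
  shows "bounded ((\<lambda>x. scaleC (c x) (c' x)) ` B)"
proof -
  obtain K K' where "\<forall>x\<in>B. norm (c x) \<le> K" "\<forall>x\<in>B. norm (c' x) \<le> K'"
    using assms unfolding bounded_iff by auto
  then have "\<forall>x\<in>B. norm (scaleC (c x) (c' x)) \<le> K * K'"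
    by (auto simp: norm_scaleC intro!: mult_mono order_trans[OF norm_ge_zero])
  then show ?thesis
    unfolding bounded_iff by blast
qed

lemma trig_coefficients_trig_list_product:
  fixes L1 :: "((real^'n) \<times> ('x::real_normed_vector \<Rightarrow> complex)) list"
    and L2 :: "((real^'n) \<times> ('x \<Rightarrow> 'z::complex_normed_vector)) list"
  assumes "trig_coefficients L1" "trig_coefficients L2"
  shows "trig_coefficients (trig_list_product L1 L2)"
  using assms unfolding trig_coefficients_def trig_list_product_def
  by (fastforce intro: continuous_on_scaleC bounded_image_scaleC)

lemma trig_poly_scaleC:
  fixes P1 :: "real^'n \<Rightarrow> 'x::real_normed_vector \<Rightarrow> complex"
    and P2 :: "real^'n \<Rightarrow> 'x \<Rightarrow> 'z::complex_normed_vector"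
  assumes "trig_poly P1" "trig_poly P2"
  shows "trig_poly (\<lambda>t x. scaleC (P1 t x) (P2 t x))"
proof -
  obtain L1 L2 where "trig_coefficients L1" "P1 = trig_sum L1" "trig_coefficients L2" "P2 = trig_sum L2"
    using assms unfolding trig_poly_iff_trig_sum by blast
  then show ?thesis
    unfolding trig_poly_iff_trig_sum
    by (intro exI[of _ "trig_list_product L1 L2"])
      (simp add: trig_coefficients_trig_list_product trig_sum_trig_list_product fun_eq_iff)
qed

section \<open>Measurability\<close>

lemma borel_measurable_Pair_second_countable:
  fixes f :: "'m \<Rightarrow> 'a::second_countable_topology" and g :: "'m \<Rightarrow> 'b::topological_space"
  assumes f: "f \<in> borel_measurable M" and g: "g \<in> borel_measurable M"
  shows "(\<lambda>x. (f x, g x)) \<in> borel_measurable M"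
proof (rule borel_measurableI)
  fix W :: "('a \<times> 'b) set"
  assume "open W"
  obtain \<B> :: "'a set set" where "countable \<B>" and open_\<B>: "\<And>C. C \<in> \<B> \<Longrightarrow> open C"
    and basis: "\<And>S. open S \<Longrightarrow> \<exists>U. U \<subseteq> \<B> \<and> S = \<Union>U"
    by (rule univ_second_countable) blast
  define V where "V U = \<Union>{V. open V \<and> U \<times> V \<subseteq> W}" for U
  have open_V: "open (V U)" for U
    unfolding V_def by auto
  have W: "W = (\<Union>U\<in>\<B>. U \<times> V U)"
  proof
    show "W \<subseteq> (\<Union>U\<in>\<B>. U \<times> V U)"
    proof
      fix z
      assume "z \<in> W"
      then obtain A B where AB: "open A" "open B" "z \<in> A \<times> B" "A \<times> B \<subseteq> W"
        using \<open>open W\<close> open_prod_elim by metis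
      obtain U where "U \<subseteq> \<B>" "A = \<Union>U"
        using basis[OF \<open>open A\<close>] by blast
      with AB obtain C where C: "C \<in> \<B>" "fst z \<in> C" "C \<subseteq> A"
        by (auto simp: mem_Times_iff)
      then have "B \<subseteq> V C"
        unfolding V_def using AB by blast
      then show "z \<in> (\<Union>U\<in>\<B>. U \<times> V U)"
        using C AB(3) by (auto simp: mem_Times_iff)
    qed
    show "(\<Union>U\<in>\<B>. U \<times> V U) \<subseteq> W"
      unfolding V_def by auto
  qed
  have "(\<lambda>x. (f x, g x)) -` W \<inter> space M = (\<Union>U\<in>\<B>. (f -` U \<inter> space M) \<inter> (g -` V U \<inter> space M))"
    by (subst W) auto
  also have "\<dots> \<in> sets M"
    using \<open>countable \<B>\<close> open_\<B> open_V f g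
    by (intro sets.countable_UN' sets.Int) (auto intro: measurable_sets_borel)
  finally show "(\<lambda>x. (f x, g x)) -` W \<inter> space M \<in> sets M" .
qed

lemma borel_measurable_continuous_Pair_second_countable:
  fixes f :: "'m \<Rightarrow> 'a::second_countable_topology" and g :: "'m \<Rightarrow> 'b::topological_space"
  assumes "f \<in> borel_measurable M" "g \<in> borel_measurable M"
    and "continuous_on UNIV (\<lambda>z. H (fst z) (snd z))"
  shows "(\<lambda>x. H (f x) (g x)) \<in> borel_measurable M"
  using measurable_compose[OF borel_measurable_Pair_second_countable[OF assms(1,2)]
      borel_measurable_continuous_onI[OF assms(3)]] by simp

lemma borel_measurable_scaleC:
  fixes f :: "'m \<Rightarrow> complex" and g :: "'m \<Rightarrow> 'z::complex_normed_vector"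
  assumes "f \<in> borel_measurable M" "g \<in> borel_measurable M"
  shows "(\<lambda>v. scaleC (f v) (g v)) \<in> borel_measurable M"
  by (rule borel_measurable_continuous_Pair_second_countable[OF assms])
    (intro continuous_on_scaleC continuous_on_fst continuous_on_snd continuous_on_id)

lemma borel_measurable_norm_diff_trig_poly:
  fixes g :: "real^'n \<Rightarrow> 'z::complex_normed_vector"
  assumes "Lam \<in> sets lebesgue" "g \<in> borel_measurable (lebesgue_on Lam)" "trig_poly P"
  shows "(\<lambda>v. norm (g v - P v x)) \<in> borel_measurable (lebesgue_on Lam)"
proof -
  have "(\<lambda>v. v) \<in> borel_measurable (lebesgue_on Lam)"
    using assms(1) by (intro continuous_imp_measurable_on_sets_lebesgue continuous_on_id)
  moreover have "continuous_on UNIV (\<lambda>z::(real^'n) \<times> 'z. snd z - P (fst z) x)"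
    by (intro continuous_on_diff continuous_on_snd continuous_on_id
        continuous_on_compose2[OF trig_poly_continuous[OF assms(3)] continuous_on_fst]) simp_all
  ultimately have "(\<lambda>v. g v - P v x) \<in> borel_measurable (lebesgue_on Lam)"
    using borel_measurable_continuous_Pair_second_countable[OF _ assms(2), of "\<lambda>v. v" "\<lambda>t w. w - P t x"]
    by simp
  then show ?thesis
    by (rule borel_measurable_norm[THEN measurable_compose[rotated]])
qed

section \<open>Power inequalities\<close>

lemma powr_le_powr_iff:
  fixes x y s :: real
  assumes "x \<ge> 0" "y \<ge> 0" "s > 0"
  shows "x powr s \<le> y powr s \<longleftrightarrow> x \<le> y"
  using assms powr_mono2[of s x y] powr_less_mono2[of s y x] by (auto simp: not_le[symmetric])

lemma mult_powr_le_Young: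
  fixes x y p q r l :: real
  assumes "x \<ge> 0" "y \<ge> 0" "p > 0" "q > 0" "r > 0" "1 / r = 1 / p + 1 / q" "l > 0"
  shows "(x * y) powr r \<le> l powr (- p) * x powr p + l powr q * y powr q"
proof -
  have "inverse p < inverse r" "inverse q < inverse r"
    using assms by (simp_all add: inverse_eq_divide)
  then have "r < p" "r < q"
    using assms by (simp_all add: inverse_less_iff_less)
  have "1 / (p / r) + 1 / (q / r) = r * (1 / p + 1 / q)"
    by (simp add: distrib_left)
  also have "\<dots> = 1"
    using assms(5) by (simp only: assms(6)[symmetric]) simp
  finally have conj: "1 / (p / r) + 1 / (q / r) = 1" .
  have "(x * y) powr r = (x / l) powr r * (l * y) powr r"
    using assms by (simp add: powr_mult[symmetric])
  also have "\<dots> \<le> ((x / l) powr r) powr (p / r) / (p / r) + ((l * y) powr r) powr (q / r) / (q / r)"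
    using \<open>r < p\<close> \<open>r < q\<close> assms by (intro Youngs_inequality conj) auto
  also have "\<dots> = r / p * (x / l) powr p + r / q * (l * y) powr q"
    using assms by (simp add: powr_powr mult.commute)
  also have "\<dots> \<le> (x / l) powr p + (l * y) powr q"
    using \<open>r < p\<close> \<open>r < q\<close> assms
    by (intro add_mono mult_left_le_one_le) auto
  also have "\<dots> = l powr (- p) * x powr p + l powr q * y powr q"
    using assms by (simp add: powr_divide powr_mult powr_minus divide_inverse mult.commute inverse_powr)
  finally show ?thesis .
qed

lemma powr_add3_le:
  fixes x y z s :: real
  assumes "x \<ge> 0" "y \<ge> 0" "z \<ge> 0" "s > 0"
  shows "(x + y + z) powr s \<le> 3 powr s * (x powr s + y powr s + z powr s)"
proof -
  define m where "m = max x (max y z)"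
  have "m \<ge> 0" "x + y + z \<le> 3 * m"
    using assms unfolding m_def by linarith+
  then have "(x + y + z) powr s \<le> (3 * m) powr s"
    using assms by (intro powr_mono2) auto
  also have "\<dots> = 3 powr s * m powr s"
    using \<open>m \<ge> 0\<close> by (simp add: powr_mult)
  also have "m powr s \<le> x powr s + y powr s + z powr s"
    unfolding m_def by (auto simp: max_def add_increasing add_increasing2)
  finally show ?thesis
    by simp
qed

lemma nn_integral_powr_add3_le:
  fixes h f g k :: "'a \<Rightarrow> real"
  assumes "f \<in> borel_measurable M" "g \<in> borel_measurable M" "k \<in> borel_measurable M"
    and "\<And>v. 0 \<le> f v" "\<And>v. 0 \<le> g v" "\<And>v. 0 \<le> k v" "\<And>v. 0 \<le> h v"
    and "\<And>v. h v \<le> f v + g v + k v" and "s > 0"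
  shows "(\<integral>\<^sup>+ v. h v powr s \<partial>M) \<le> 3 powr s *
    ((\<integral>\<^sup>+ v. f v powr s \<partial>M) + (\<integral>\<^sup>+ v. g v powr s \<partial>M) + (\<integral>\<^sup>+ v. k v powr s \<partial>M))"
proof -
  have "(\<integral>\<^sup>+ v. h v powr s \<partial>M)
      \<le> (\<integral>\<^sup>+ v. 3 powr s * (ennreal (f v powr s) + ennreal (g v powr s) + ennreal (k v powr s)) \<partial>M)"
  proof (rule nn_integral_mono)
    fix v
    have "h v powr s \<le> (f v + g v + k v) powr s"
      using assms(4-9) by (intro powr_mono2) auto
    also have "\<dots> \<le> 3 powr s * (f v powr s + g v powr s + k v powr s)"
      using assms(4-6,9) by (rule powr_add3_le)
    finally have "ennreal (h v powr s) \<le> ennreal (3 powr s * (f v powr s + g v powr s + k v powr s))"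
      by (rule ennreal_leI)
    then show "ennreal (h v powr s)
        \<le> 3 powr s * (ennreal (f v powr s) + ennreal (g v powr s) + ennreal (k v powr s))"
      by (simp add: ennreal_mult)
  qed
  also have "\<dots> = 3 powr s *
    ((\<integral>\<^sup>+ v. f v powr s \<partial>M) + (\<integral>\<^sup>+ v. g v powr s \<partial>M) + (\<integral>\<^sup>+ v. k v powr s \<partial>M))"
    using assms(1-3) by (simp add: nn_integral_cmult nn_integral_add)
  finally show ?thesis .
qed

lemma nn_integral_mult_powr_le_Young:
  fixes f g :: "'a \<Rightarrow> real"
  assumes "f \<in> borel_measurable M" "g \<in> borel_measurable M" "\<And>v. 0 \<le> f v" "\<And>v. 0 \<le> g v"
    and "p > 0" "q > 0" "r > 0" "1 / r = 1 / p + 1 / q" "l > 0"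
  shows "(\<integral>\<^sup>+ v. (f v * g v) powr r \<partial>M)
    \<le> l powr (- p) * (\<integral>\<^sup>+ v. f v powr p \<partial>M) + l powr q * (\<integral>\<^sup>+ v. g v powr q \<partial>M)"
proof -
  have "(\<integral>\<^sup>+ v. (f v * g v) powr r \<partial>M)
      \<le> (\<integral>\<^sup>+ v. l powr (- p) * ennreal (f v powr p) + l powr q * ennreal (g v powr q) \<partial>M)"
  proof (rule nn_integral_mono)
    fix v
    have "(f v * g v) powr r \<le> l powr (- p) * f v powr p + l powr q * g v powr q"
      using assms(3-9) by (rule mult_powr_le_Young)
    then have "ennreal ((f v * g v) powr r)
        \<le> ennreal (l powr (- p) * f v powr p + l powr q * g v powr q)"
      by (rule ennreal_leI)
    then show "ennreal ((f v * g v) powr r)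
        \<le> l powr (- p) * ennreal (f v powr p) + l powr q * ennreal (g v powr q)"
      by (simp add: ennreal_mult)
  qed
  also have "\<dots> = l powr (- p) * (\<integral>\<^sup>+ v. f v powr p \<partial>M) + l powr q * (\<integral>\<^sup>+ v. g v powr q \<partial>M)"
    using assms(1,2) by (simp add: nn_integral_cmult nn_integral_add)
  finally show ?thesis .
qed

lemma exists_Young_parameters:
  fixes C U V p q E :: real
  assumes "C > 0" "U \<ge> 0" "V \<ge> 0" "p > 0" "q > 0" "E > 0"
  shows "\<exists>l \<epsilon>. l > 0 \<and> \<epsilon> > 0 \<and>
    C * ((l powr - p + 1) * \<epsilon> + (l powr - q + 1) * \<epsilon> + l powr q * U + l powr p * V) \<le> E"
proof -
  have "((\<lambda>l. l powr e) \<longlongrightarrow> 0) (at_right 0)" if "e > 0" for e :: real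
    using that by (intro tendsto_zero_powrI tendsto_ident_at eventually_at_rightI[of 0 1]) auto
  then have "((\<lambda>l. C * (l powr q * U + l powr p * V)) \<longlongrightarrow> C * (0 * U + 0 * V)) (at_right 0)"
    using assms by (intro tendsto_intros) auto
  then have "\<forall>\<^sub>F l in at_right 0. C * (l powr q * U + l powr p * V) < E / 2"
    using assms by (intro order_tendstoD(2)) auto
  then have "\<forall>\<^sub>F l in at_right 0. 0 < l \<and> C * (l powr q * U + l powr p * V) < E / 2"
    by (intro eventually_conj eventually_at_right_less)
  from eventually_happens[OF this] obtain l :: real
    where "l > 0" and l: "C * (l powr q * U + l powr p * V) < E / 2"
    by auto
  define A where "A = l powr - p + l powr - q + 2"
  have "A > 0"
    unfolding A_def by (simp add: add_nonneg_pos)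
  define \<epsilon> where "\<epsilon> = E / (2 * C * A)"
  have "\<epsilon> > 0"
    using assms \<open>A > 0\<close> by (simp add: \<epsilon>_def)
  have "C * ((l powr - p + 1) * \<epsilon> + (l powr - q + 1) * \<epsilon>) = C * A * \<epsilon>"
    unfolding A_def by (simp add: algebra_simps)
  also have "\<dots> = E / 2"
    using assms \<open>A > 0\<close> unfolding \<epsilon>_def by simp
  finally have "C * ((l powr - p + 1) * \<epsilon> + (l powr - q + 1) * \<epsilon>) = E / 2" .
  then have "C * ((l powr - p + 1) * \<epsilon> + (l powr - q + 1) * \<epsilon> + l powr q * U + l powr p * V) \<le> E"
    using l by (simp add: algebra_simps)
  then show ?thesis
    using \<open>l > 0\<close> \<open>\<epsilon> > 0\<close> by blast
qed

section \<open>Weighted means over the windows\<close>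

lemma Lambda_t_eq: "Lambda_t Lam t = Lam \<inter> cbox (\<chi> i. - t) (\<chi> i. t)"
  unfolding Lambda_t_def by (auto simp: mem_box_cart abs_le_iff) (metis minus_le_iff)+

lemma Lambda_t_subset: "Lambda_t Lam t \<subseteq> Lam"
  unfolding Lambda_t_def by auto

lemma sets_Lambda_t: "Lam \<in> sets lebesgue \<Longrightarrow> Lambda_t Lam t \<in> sets lebesgue"
  unfolding Lambda_t_eq by auto

lemma emeasure_Lambda_t_le:
  fixes Lam :: "(real^'n) set"
  assumes "t \<ge> 0"
  shows "emeasure lebesgue (Lambda_t Lam t) \<le> (2 * t) ^ CARD('n)"
proof -
  have "emeasure lebesgue (Lambda_t Lam t) \<le> emeasure lebesgue (cbox (\<chi> i. - t) (\<chi> i. t) :: (real^'n) set)"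
    unfolding Lambda_t_eq by (intro emeasure_mono) auto
  also have "\<dots> = emeasure lborel (cbox (\<chi> i. - t) (\<chi> i. t) :: (real^'n) set)"
    by simp
  also have "\<dots> = measure lborel (cbox (\<chi> i. - t) (\<chi> i. t) :: (real^'n) set)"
    using emeasure_lborel_cbox_finite[of "(\<chi> i. - t) :: real^'n" "\<chi> i. t"]
    by (intro emeasure_eq_ennreal_measure) auto
  also have "\<dots> = (2 * t) ^ CARD('n)"
    using assms by (subst content_cbox_cart) (auto simp: interval_ne_empty_cart)
  finally show ?thesis .
qed

lemma weighted_emeasure_Lambda_t_le:
  fixes Lam :: "(real^'n) set"
  assumes "t > 0"
  shows "ennreal (t powr - real CARD('n)) * emeasure lebesgue (Lambda_t Lam t) \<le> ennreal (2 ^ CARD('n))"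
proof -
  have "ennreal (t powr - real CARD('n)) * emeasure lebesgue (Lambda_t Lam t)
      \<le> ennreal (t powr - real CARD('n)) * ennreal ((2 * t) ^ CARD('n))"
    using assms by (intro mult_left_mono emeasure_Lambda_t_le) auto
  also have "\<dots> = ennreal (t powr - real CARD('n) * (2 * t) ^ CARD('n))"
    using assms by (simp add: ennreal_mult)
  also have "t powr - real CARD('n) * (2 * t) ^ CARD('n) = 2 ^ CARD('n)"
    using assms by (simp add: power_mult_distrib powr_minus powr_realpow[symmetric] field_simps)
  finally show ?thesis .
qed

text \<open>\<open>mean_power s Lam t g\<close> is \<open>(\<omega>(t) \<parallel>g\<parallel>\<^sub>L\<^sub>s\<^sub>(\<^sub>\<Lambda>\<^sub>t\<^sub>))\<^sup>s\<close> for \<open>\<omega>(t) = t\<^sup>-\<^sup>n\<^sup>/\<^sup>s\<close>; unlike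
  \<open>Lnorm\<close> it has no root, so it is linear in \<open>|g|\<^sup>s\<close>.\<close>

definition mean_power :: "real \<Rightarrow> (real^'n) set \<Rightarrow> real \<Rightarrow> (real^'n \<Rightarrow> real) \<Rightarrow> ennreal" where
  "mean_power s Lam t g =
     ennreal (t powr - real CARD('n)) * (\<integral>\<^sup>+ v \<in> Lambda_t Lam t. ennreal (\<bar>g v\<bar> powr s) \<partial>lebesgue)"

lemma Lnorm_le_iff_mean_power:
  fixes g :: "real^'n \<Rightarrow> real"
  assumes "t > 0" "s > 0" "e \<ge> 0"
  shows "ennreal (t powr (- real CARD('n) / s)) * Lnorm s (Lambda_t Lam t) g \<le> ennreal e
    \<longleftrightarrow> mean_power s Lam t g \<le> ennreal (e powr s)"
proof -
  define I where "I = (\<integral>\<^sup>+ v \<in> Lambda_t Lam t. ennreal (\<bar>g v\<bar> powr s) \<partial>lebesgue)"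
  have Lnorm: "Lnorm s (Lambda_t Lam t) g = (if I = \<infinity> then \<infinity> else ennreal (enn2real I powr (1 / s)))"
    unfolding Lnorm_def I_def by simp
  have mean: "mean_power s Lam t g = ennreal (t powr - real CARD('n)) * I"
    unfolding mean_power_def I_def ..
  show ?thesis
  proof (cases I)
    case (real J)
    have "t powr (- real CARD('n) / s) * J powr (1 / s) \<le> e
        \<longleftrightarrow> (t powr (- real CARD('n) / s) * J powr (1 / s)) powr s \<le> e powr s"
      using assms \<open>J \<ge> 0\<close> by (simp add: powr_le_powr_iff)
    also have "(t powr (- real CARD('n) / s) * J powr (1 / s)) powr s = t powr - real CARD('n) * J"
      using assms \<open>J \<ge> 0\<close> by (simp add: powr_mult powr_powr)
    finally show ?thesis
      using assms \<open>J \<ge> 0\<close> real unfolding Lnorm mean by (simp add: ennreal_mult[symmetric])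
  qed (use assms in \<open>simp_all add: Lnorm mean ennreal_mult_top top_unique\<close>)
qed

lemma mean_power_lebesgue_on:
  fixes Lam :: "(real^'n) set"
  assumes "Lam \<in> sets lebesgue"
  shows "mean_power s Lam t g = ennreal (t powr - real CARD('n))
    * (\<integral>\<^sup>+ v. ennreal (\<bar>g v\<bar> powr s) \<partial>lebesgue_on (Lambda_t Lam t))"
  unfolding mean_power_def using sets_Lambda_t[OF assms]
  by (simp add: nn_integral_restrict_space)

lemma mean_power_powr:
  assumes "\<And>v. u v \<ge> 0"
  shows "mean_power s Lam t (\<lambda>v. u v powr a) = mean_power (a * s) Lam t u"
  using assms unfolding mean_power_def by (simp add: powr_powr)

definition Besicovitch_seminorm ::
  "real \<Rightarrow> (real^'n) set \<Rightarrow> 'x set \<Rightarrow> ('x \<Rightarrow> real^'n \<Rightarrow> real) \<Rightarrow> ennreal" where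
  "Besicovitch_seminorm s Lam B g = Limsup at_top (\<lambda>t. ennreal (t powr (- real CARD('n) / s)) *
     (SUP x\<in>B. Lnorm s (Lambda_t Lam t) (g x)))"

lemma e_Besicovitch_powr_iff:
  fixes Lam :: "(real^'n) set" and F :: "real^'n \<Rightarrow> 'x::real_normed_vector \<Rightarrow> 'z::complex_normed_vector"
  shows "e_Besicovitch BB (\<lambda>y. y powr \<alpha>) (\<lambda>t. t powr (- real CARD('n) / s)) s Lam F \<longleftrightarrow>
    (\<forall>x. (\<lambda>t. F t x) \<in> borel_measurable (lebesgue_on Lam)) \<and>
    (\<forall>B \<in> BB. \<exists>P :: nat \<Rightarrow> real^'n \<Rightarrow> 'x \<Rightarrow> 'z. (\<forall>k. trig_poly (P k)) \<and>
       (\<lambda>k. Besicovitch_seminorm s Lam B (\<lambda>x v. norm (F v x - P k v x) powr \<alpha>)) \<longlonglongrightarrow> 0)"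
  unfolding e_Besicovitch_def Besicovitch_seminorm_def ..

lemma eventually_mean_power_le_of_seminorm_less:
  fixes Lam :: "(real^'n) set" and g :: "'x \<Rightarrow> real^'n \<Rightarrow> real"
  assumes "s > 0" "d > 0" and "Besicovitch_seminorm s Lam B g < ennreal d"
  shows "\<forall>\<^sub>F t in at_top. \<forall>x\<in>B. mean_power s Lam t (g x) \<le> ennreal (d powr s)"
  using Limsup_lessD[OF assms(3)[unfolded Besicovitch_seminorm_def]] eventually_gt_at_top[of 0]
proof eventually_elim
  case (elim t)
  show ?case
  proof
    fix x
    assume "x \<in> B"
    then have "ennreal (t powr (- real CARD('n) / s)) * Lnorm s (Lambda_t Lam t) (g x)
        \<le> ennreal (t powr (- real CARD('n) / s)) * (SUP x\<in>B. Lnorm s (Lambda_t Lam t) (g x))"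
      by (intro mult_left_mono SUP_upper) auto
    also have "\<dots> \<le> ennreal d"
      using elim by simp
    finally show "mean_power s Lam t (g x) \<le> ennreal (d powr s)"
      using Lnorm_le_iff_mean_power[of t s d Lam "g x"] elim assms(1,2) by auto
  qed
qed

lemma Besicovitch_seminorm_le_of_eventually_mean_power_le:
  fixes Lam :: "(real^'n) set" and g :: "'x \<Rightarrow> real^'n \<Rightarrow> real"
  assumes "s > 0" "e \<ge> 0"
    and "\<forall>\<^sub>F t in at_top. \<forall>x\<in>B. mean_power s Lam t (g x) \<le> ennreal (e powr s)"
  shows "Besicovitch_seminorm s Lam B g \<le> ennreal e"
  unfolding Besicovitch_seminorm_def
proof (rule Limsup_bounded)
  show "\<forall>\<^sub>F t in at_top. ennreal (t powr (- real CARD('n) / s)) *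
      (SUP x\<in>B. Lnorm s (Lambda_t Lam t) (g x)) \<le> ennreal e"
    using assms(3) eventually_gt_at_top[of 0]
  proof eventually_elim
    case (elim t)
    then show ?case
      using Lnorm_le_iff_mean_power[of t s e Lam] assms(1,2)
      by (auto simp: SUP_mult_left_ennreal intro!: SUP_least)
  qed
qed

lemma eventually_mean_power_small:
  fixes Lam :: "(real^'n) set" and u :: "nat \<Rightarrow> 'x \<Rightarrow> real^'n \<Rightarrow> real"
  assumes "s > 0" "\<And>k x v. u k x v \<ge> 0" "\<epsilon> > 0"
    and "(\<lambda>k. Besicovitch_seminorm s Lam B (\<lambda>x v. u k x v powr a)) \<longlonglongrightarrow> 0"
  shows "\<forall>\<^sub>F k in sequentially. \<forall>\<^sub>F t in at_top. \<forall>x\<in>B. mean_power (a * s) Lam t (u k x) \<le> ennreal \<epsilon>"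
proof -
  define d where "d = \<epsilon> powr (1 / s)"
  have "d > 0" "d powr s = \<epsilon>"
    using assms(1,3) by (simp_all add: d_def powr_powr)
  have "\<forall>\<^sub>F k in sequentially. Besicovitch_seminorm s Lam B (\<lambda>x v. u k x v powr a) < ennreal d"
    using order_tendstoD(2)[OF assms(4), of "ennreal d"] \<open>d > 0\<close> by simp
  then show ?thesis
  proof eventually_elim
    case (elim k)
    then show ?case
      using eventually_mean_power_le_of_seminorm_less[OF assms(1) \<open>d > 0\<close> elim]
      by (simp add: \<open>d powr s = \<epsilon>\<close> mean_power_powr assms(2))
  qed
qed

section \<open>Products of approximable functions\<close>

lemma mean_power_bounded_of_approximation:
  fixes Lam :: "(real^'n) set" and F P :: "real^'n \<Rightarrow> 'x::real_normed_vector \<Rightarrow> 'z::complex_normed_vector"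
  assumes Lam: "Lam \<in> sets lebesgue" and F: "\<And>x. (\<lambda>v. F v x) \<in> borel_measurable (lebesgue_on Lam)"
    and P: "trig_poly P" and "bounded B" and s: "s > 0"
    and approx: "\<forall>\<^sub>F t in at_top. \<forall>x\<in>B. mean_power s Lam t (\<lambda>v. norm (F v x - P v x)) \<le> 1"
  shows "\<exists>V\<ge>0. \<forall>\<^sub>F t in at_top. \<forall>x\<in>B. mean_power s Lam t (\<lambda>v. norm (F v x)) \<le> ennreal V"
proof -
  obtain M0 where "\<forall>t. \<forall>x\<in>B. norm (P t x) \<le> M0"
    using trig_poly_bounded[OF P \<open>bounded B\<close>] by blast
  then obtain M where M: "M \<ge> 0" "\<And>t x. x \<in> B \<Longrightarrow> norm (P t x) \<le> M"
    by (meson max.cobounded1 max.coboundedI2)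
  have "\<forall>\<^sub>F t in at_top. \<forall>x\<in>B. mean_power s Lam t (\<lambda>v. norm (F v x))
      \<le> ennreal (3 powr s * (1 + M powr s * 2 ^ CARD('n)))"
    using approx eventually_gt_at_top[of 0]
  proof eventually_elim
    case (elim t)
    show ?case
    proof
      fix x
      assume "x \<in> B"
      let ?w = "ennreal (t powr - real CARD('n))" and ?S = "lebesgue_on (Lambda_t Lam t)"
      have meas: "(\<lambda>v. norm (F v x - P v x)) \<in> borel_measurable ?S"
        by (rule measurable_restrict_mono[OF borel_measurable_norm_diff_trig_poly[OF Lam F P]
              Lambda_t_subset])
      have "norm (F v x) \<le> norm (F v x - P v x) + M + 0" for v
        using norm_triangle_sub[of "F v x" "P v x"] M(2)[OF \<open>x \<in> B\<close>, of v] by simp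
      then have "(\<integral>\<^sup>+ v. norm (F v x) powr s \<partial>?S) \<le> 3 powr s *
          ((\<integral>\<^sup>+ v. norm (F v x - P v x) powr s \<partial>?S) + (\<integral>\<^sup>+ v. M powr s \<partial>?S) + (\<integral>\<^sup>+ v. 0 powr s \<partial>?S))"
        using M(1) s by (intro nn_integral_powr_add3_le meas) auto
      also have "\<dots> = 3 powr s * ((\<integral>\<^sup>+ v. norm (F v x - P v x) powr s \<partial>?S)
          + M powr s * emeasure lebesgue (Lambda_t Lam t))"
        using sets_Lambda_t[OF Lam] s by (simp add: emeasure_restrict_space)
      finally have "mean_power s Lam t (\<lambda>v. norm (F v x)) \<le> 3 powr s *
          (mean_power s Lam t (\<lambda>v. norm (F v x - P v x)) + M powr s * (?w * emeasure lebesgue (Lambda_t Lam t)))"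
        unfolding mean_power_lebesgue_on[OF Lam]
        by (auto dest: mult_left_mono[of _ _ ?w] simp: algebra_simps)
      also have "\<dots> \<le> ennreal (3 powr s) * (1 + ennreal (M powr s) * ennreal (2 ^ CARD('n)))"
        using elim \<open>x \<in> B\<close> weighted_emeasure_Lambda_t_le[of t Lam]
        by (intro mult_left_mono add_mono) auto
      finally show "mean_power s Lam t (\<lambda>v. norm (F v x)) \<le> ennreal (3 powr s * (1 + M powr s * 2 ^ CARD('n)))"
        using M(1) by (simp add: ennreal_mult ennreal_plus ennreal_power)
    qed
  qed
  then show ?thesis
    using M(1) by (intro exI[of _ "3 powr s * (1 + M powr s * 2 ^ CARD('n))"]) simp
qed

lemma mean_power_bounded_of_tendsto:
  fixes Lam :: "(real^'n) set" and F :: "real^'n \<Rightarrow> 'x::real_normed_vector \<Rightarrow> 'z::complex_normed_vector"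
  assumes Lam: "Lam \<in> sets lebesgue" and F: "\<And>x. (\<lambda>v. F v x) \<in> borel_measurable (lebesgue_on Lam)"
    and P: "\<And>k. trig_poly (P k)" and "bounded B" and "s > 0" "a > 0"
    and T: "(\<lambda>k. Besicovitch_seminorm s Lam B (\<lambda>x v. norm (F v x - P k v x) powr a)) \<longlonglongrightarrow> 0"
  shows "\<exists>V\<ge>0. \<forall>\<^sub>F t in at_top. \<forall>x\<in>B. mean_power (a * s) Lam t (\<lambda>v. norm (F v x)) \<le> ennreal V"
proof -
  obtain k where "\<forall>\<^sub>F t in at_top. \<forall>x\<in>B. mean_power (a * s) Lam t (\<lambda>v. norm (F v x - P k v x)) \<le> 1"
    using eventually_happens[OF eventually_mean_power_small[OF \<open>s > 0\<close> _ _ T, of 1]] by auto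
  then show ?thesis
    using \<open>s > 0\<close> \<open>a > 0\<close>
    by (intro mean_power_bounded_of_approximation[where F = F and P = "P k", OF Lam F P \<open>bounded B\<close>]) auto
qed

lemma mean_power_product_le:
  fixes Lam :: "(real^'n) set" and u1 u2 w1 w2 N :: "real^'n \<Rightarrow> real"
  assumes Lam: "Lam \<in> sets lebesgue"
    and meas: "u1 \<in> borel_measurable (lebesgue_on Lam)" "u2 \<in> borel_measurable (lebesgue_on Lam)"
      "w1 \<in> borel_measurable (lebesgue_on Lam)" "w2 \<in> borel_measurable (lebesgue_on Lam)"
    and nonneg: "\<And>v. u1 v \<ge> 0" "\<And>v. u2 v \<ge> 0" "\<And>v. w1 v \<ge> 0" "\<And>v. w2 v \<ge> 0" "\<And>v. N v \<ge> 0"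
    and N: "\<And>v. N v \<le> u1 v * w2 v + w1 v * u2 v + u1 v * u2 v"
    and pqr: "p > 0" "q > 0" "r > 0" "1 / r = 1 / p + 1 / q" and l: "l > 0"
  shows "mean_power r Lam t N \<le> ennreal (3 powr r) *
    (ennreal (l powr - p + 1) * mean_power p Lam t u1 + ennreal (l powr - q + 1) * mean_power q Lam t u2
      + ennreal (l powr q) * mean_power q Lam t w2 + ennreal (l powr p) * mean_power p Lam t w1)"
proof -
  let ?S = "lebesgue_on (Lambda_t Lam t)"
  have [measurable]: "u1 \<in> borel_measurable ?S" "u2 \<in> borel_measurable ?S"
    "w1 \<in> borel_measurable ?S" "w2 \<in> borel_measurable ?S"
    using meas by (auto intro: measurable_restrict_mono[OF _ Lambda_t_subset])
  have qpr: "1 / r = 1 / q + 1 / p"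
    using pqr(4) by simp
  have "(\<integral>\<^sup>+ v. N v powr r \<partial>?S) \<le> 3 powr r * ((\<integral>\<^sup>+ v. (u1 v * w2 v) powr r \<partial>?S)
      + (\<integral>\<^sup>+ v. (u2 v * w1 v) powr r \<partial>?S) + (\<integral>\<^sup>+ v. (u1 v * u2 v) powr r \<partial>?S))"
    using N nonneg pqr(3) by (intro nn_integral_powr_add3_le) (auto simp: mult.commute)
  also have "\<dots> \<le> 3 powr r *
      ((l powr - p * (\<integral>\<^sup>+ v. u1 v powr p \<partial>?S) + l powr q * (\<integral>\<^sup>+ v. w2 v powr q \<partial>?S))
      + (l powr - q * (\<integral>\<^sup>+ v. u2 v powr q \<partial>?S) + l powr p * (\<integral>\<^sup>+ v. w1 v powr p \<partial>?S))
      + (1 powr - p * (\<integral>\<^sup>+ v. u1 v powr p \<partial>?S) + 1 powr q * (\<integral>\<^sup>+ v. u2 v powr q \<partial>?S)))"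
    using nonneg pqr l
    by (intro mult_left_mono add_mono nn_integral_mult_powr_le_Young qpr) auto
  also have "\<dots> = 3 powr r * ((l powr - p + 1) * (\<integral>\<^sup>+ v. u1 v powr p \<partial>?S)
      + (l powr - q + 1) * (\<integral>\<^sup>+ v. u2 v powr q \<partial>?S)
      + l powr q * (\<integral>\<^sup>+ v. w2 v powr q \<partial>?S) + l powr p * (\<integral>\<^sup>+ v. w1 v powr p \<partial>?S))"
    by (simp add: ennreal_plus algebra_simps)
  finally show ?thesis
    unfolding mean_power_lebesgue_on[OF Lam] using nonneg
    by (auto dest: mult_left_mono[of _ _ "ennreal (t powr - real CARD('n))"] simp: algebra_simps)
qed

lemma eventually_mean_power_scaleC_defect_le:
  fixes Lam :: "(real^'n) set" and F1 P1 :: "real^'n \<Rightarrow> 'x::real_normed_vector \<Rightarrow> complex"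
    and F2 P2 :: "real^'n \<Rightarrow> 'x \<Rightarrow> 'z::complex_normed_vector"
  assumes Lam: "Lam \<in> sets lebesgue"
    and F1: "\<And>x. (\<lambda>v. F1 v x) \<in> borel_measurable (lebesgue_on Lam)"
    and F2: "\<And>x. (\<lambda>v. F2 v x) \<in> borel_measurable (lebesgue_on Lam)"
    and P1: "trig_poly P1" and P2: "trig_poly P2"
    and pqr: "p > 0" "q > 0" "r > 0" "1 / r = 1 / p + 1 / q" and l: "l > 0"
    and nonneg: "\<epsilon> \<ge> 0" "U \<ge> 0" "V \<ge> 0"
    and approx1: "\<forall>\<^sub>F t in at_top. \<forall>x\<in>B. mean_power p Lam t (\<lambda>v. norm (F1 v x - P1 v x)) \<le> ennreal \<epsilon>"
    and approx2: "\<forall>\<^sub>F t in at_top. \<forall>x\<in>B. mean_power q Lam t (\<lambda>v. norm (F2 v x - P2 v x)) \<le> ennreal \<epsilon>"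
    and mean_F2: "\<forall>\<^sub>F t in at_top. \<forall>x\<in>B. mean_power q Lam t (\<lambda>v. norm (F2 v x)) \<le> ennreal U"
    and mean_F1: "\<forall>\<^sub>F t in at_top. \<forall>x\<in>B. mean_power p Lam t (\<lambda>v. norm (F1 v x)) \<le> ennreal V"
  shows "\<forall>\<^sub>F t in at_top. \<forall>x\<in>B.
    mean_power r Lam t (\<lambda>v. norm (scaleC (F1 v x) (F2 v x) - scaleC (P1 v x) (P2 v x)))
      \<le> ennreal (3 powr r * ((l powr - p + 1) * \<epsilon> + (l powr - q + 1) * \<epsilon> + l powr q * U + l powr p * V))"
  using approx1 approx2 mean_F2 mean_F1
proof eventually_elim
  case (elim t)
  show ?case
  proof
    fix x
    assume "x \<in> B"
    have "mean_power r Lam t (\<lambda>v. norm (scaleC (F1 v x) (F2 v x) - scaleC (P1 v x) (P2 v x)))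
      \<le> ennreal (3 powr r) *
        (ennreal (l powr - p + 1) * mean_power p Lam t (\<lambda>v. norm (F1 v x - P1 v x))
        + ennreal (l powr - q + 1) * mean_power q Lam t (\<lambda>v. norm (F2 v x - P2 v x))
        + ennreal (l powr q) * mean_power q Lam t (\<lambda>v. norm (F2 v x))
        + ennreal (l powr p) * mean_power p Lam t (\<lambda>v. norm (F1 v x)))"
      using borel_measurable_norm_diff_trig_poly[OF Lam F1 P1] borel_measurable_norm_diff_trig_poly[OF Lam F2 P2]
        borel_measurable_norm[THEN measurable_compose[rotated], OF F1]
        borel_measurable_norm[THEN measurable_compose[rotated], OF F2]
      by (intro mean_power_product_le Lam pqr l norm_scaleC_diff_le) auto
    also have "\<dots> \<le> ennreal (3 powr r) * (ennreal (l powr - p + 1) * ennreal \<epsilon> + ennreal (l powr - q + 1) * ennreal \<epsilon>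
        + ennreal (l powr q) * ennreal U + ennreal (l powr p) * ennreal V)"
      using elim \<open>x \<in> B\<close> by (intro mult_left_mono add_mono) auto
    also have "\<dots> = ennreal (3 powr r * ((l powr - p + 1) * \<epsilon> + (l powr - q + 1) * \<epsilon> + l powr q * U + l powr p * V))"
      using nonneg by (simp add: ennreal_mult)
    finally show "mean_power r Lam t (\<lambda>v. norm (scaleC (F1 v x) (F2 v x) - scaleC (P1 v x) (P2 v x)))
      \<le> ennreal (3 powr r * ((l powr - p + 1) * \<epsilon> + (l powr - q + 1) * \<epsilon> + l powr q * U + l powr p * V))" .
  qed
qed

lemma scaleC_approximation_tendsto_0:
  fixes Lam :: "(real^'n) set" and F1 :: "real^'n \<Rightarrow> 'x::real_normed_vector \<Rightarrow> complex"
    and F2 :: "real^'n \<Rightarrow> 'x \<Rightarrow> 'z::complex_normed_vector"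
    and P1 :: "nat \<Rightarrow> real^'n \<Rightarrow> 'x \<Rightarrow> complex" and P2 :: "nat \<Rightarrow> real^'n \<Rightarrow> 'x \<Rightarrow> 'z"
  assumes Lam: "Lam \<in> sets lebesgue"
    and mF1: "\<And>x. (\<lambda>v. F1 v x) \<in> borel_measurable (lebesgue_on Lam)"
    and mF2: "\<And>x. (\<lambda>v. F2 v x) \<in> borel_measurable (lebesgue_on Lam)"
    and P1: "\<And>k. trig_poly (P1 k)" and P2: "\<And>k. trig_poly (P2 k)" and "bounded B"
    and pqr: "p > 0" "q > 0" "r > 0" "1 / r = 1 / p + 1 / q" and a: "a > 0"
    and T1: "(\<lambda>k. Besicovitch_seminorm p Lam B (\<lambda>x v. norm (F1 v x - P1 k v x) powr a)) \<longlonglongrightarrow> 0"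
    and T2: "(\<lambda>k. Besicovitch_seminorm q Lam B (\<lambda>x v. norm (F2 v x - P2 k v x) powr a)) \<longlonglongrightarrow> 0"
  shows "(\<lambda>k. Besicovitch_seminorm r Lam B
    (\<lambda>x v. norm (scaleC (F1 v x) (F2 v x) - scaleC (P1 k v x) (P2 k v x)) powr a)) \<longlonglongrightarrow> 0"
proof -
  have "1 / (a * r) = 1 / a * (1 / r)"
    by simp
  also have "\<dots> = 1 / (a * p) + 1 / (a * q)"
    unfolding pqr(4) by (simp add: distrib_left)
  finally have apqr: "a * p > 0" "a * q > 0" "a * r > 0" "1 / (a * r) = 1 / (a * p) + 1 / (a * q)"
    using pqr a by simp_all
  obtain V where "V \<ge> 0" and V: "\<forall>\<^sub>F t in at_top. \<forall>x\<in>B. mean_power (a * p) Lam t (\<lambda>v. norm (F1 v x)) \<le> ennreal V"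
    using mean_power_bounded_of_tendsto[OF Lam mF1 P1 \<open>bounded B\<close> pqr(1) a T1] by blast
  obtain U where "U \<ge> 0" and U: "\<forall>\<^sub>F t in at_top. \<forall>x\<in>B. mean_power (a * q) Lam t (\<lambda>v. norm (F2 v x)) \<le> ennreal U"
    using mean_power_bounded_of_tendsto[OF Lam mF2 P2 \<open>bounded B\<close> pqr(2) a T2] by blast
  show ?thesis
  proof (rule tendsto_zero_ennreal)
    fix e :: real
    assume "e > 0"
    obtain l \<epsilon> where "l > 0" "\<epsilon> > 0" and choice: "3 powr (a * r) * ((l powr - (a * p) + 1) * \<epsilon>
        + (l powr - (a * q) + 1) * \<epsilon> + l powr (a * q) * U + l powr (a * p) * V) \<le> (e / 2) powr r"
      using exists_Young_parameters[of "3 powr (a * r)" U V "a * p" "a * q" "(e / 2) powr r"]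
        \<open>U \<ge> 0\<close> \<open>V \<ge> 0\<close> apqr \<open>e > 0\<close> by auto
    have "\<forall>\<^sub>F k in sequentially. \<forall>\<^sub>F t in at_top. \<forall>x\<in>B.
        mean_power (a * p) Lam t (\<lambda>v. norm (F1 v x - P1 k v x)) \<le> ennreal \<epsilon>"
      using \<open>\<epsilon> > 0\<close> by (intro eventually_mean_power_small[OF pqr(1) _ _ T1]) auto
    moreover have "\<forall>\<^sub>F k in sequentially. \<forall>\<^sub>F t in at_top. \<forall>x\<in>B.
        mean_power (a * q) Lam t (\<lambda>v. norm (F2 v x - P2 k v x)) \<le> ennreal \<epsilon>"
      using \<open>\<epsilon> > 0\<close> by (intro eventually_mean_power_small[OF pqr(2) _ _ T2]) auto
    ultimately show "\<forall>\<^sub>F k in sequentially. Besicovitch_seminorm r Lam B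
      (\<lambda>x v. norm (scaleC (F1 v x) (F2 v x) - scaleC (P1 k v x) (P2 k v x)) powr a) < ennreal e"
    proof eventually_elim
      case (elim k)
      have "\<forall>\<^sub>F t in at_top. \<forall>x\<in>B. mean_power (a * r) Lam t
          (\<lambda>v. norm (scaleC (F1 v x) (F2 v x) - scaleC (P1 k v x) (P2 k v x)))
        \<le> ennreal (3 powr (a * r) * ((l powr - (a * p) + 1) * \<epsilon> + (l powr - (a * q) + 1) * \<epsilon>
          + l powr (a * q) * U + l powr (a * p) * V))"
        using \<open>\<epsilon> > 0\<close> by (intro eventually_mean_power_scaleC_defect_le[OF Lam mF1 mF2 P1 P2 apqr \<open>l > 0\<close>
            _ \<open>U \<ge> 0\<close> \<open>V \<ge> 0\<close> elim U V]) simp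
      moreover have "ennreal (3 powr (a * r) * ((l powr - (a * p) + 1) * \<epsilon> + (l powr - (a * q) + 1) * \<epsilon>
          + l powr (a * q) * U + l powr (a * p) * V)) \<le> ennreal ((e / 2) powr r)"
        using choice by (rule ennreal_leI)
      ultimately have "\<forall>\<^sub>F t in at_top. \<forall>x\<in>B. mean_power (a * r) Lam t
          (\<lambda>v. norm (scaleC (F1 v x) (F2 v x) - scaleC (P1 k v x) (P2 k v x))) \<le> ennreal ((e / 2) powr r)"
        by (elim eventually_mono) (meson order_trans)
      then have "Besicovitch_seminorm r Lam B
          (\<lambda>x v. norm (scaleC (F1 v x) (F2 v x) - scaleC (P1 k v x) (P2 k v x)) powr a) \<le> ennreal (e / 2)"
        using \<open>e > 0\<close> by (intro Besicovitch_seminorm_le_of_eventually_mean_power_le[OF pqr(3)])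
          (simp_all add: mean_power_powr)
      also have "\<dots> < ennreal e"
        using \<open>e > 0\<close> by (simp add: ennreal_less_iff)
      finally show ?case .
    qed
  qed
qed

theorem proposition2p7:
  fixes BB :: "'x::{complex_normed_vector, banach} set set"
    and Lam :: "(real^'n) set"
    and F1 :: "real^'n \<Rightarrow> 'x \<Rightarrow> complex"
    and F2 :: "real^'n \<Rightarrow> 'x \<Rightarrow> 'y::{complex_normed_vector, banach}"
    and p q r \<alpha> :: real
  assumes "Lam \<in> sets lebesgue" and "Lam \<noteq> {}"
    and "BB \<noteq> {}" and "\<forall>B \<in> BB. B \<noteq> {}" and "\<Union>BB = UNIV"
    and "p \<ge> 1" and "q \<ge> 1" and "r \<ge> 1" and "1 / r = 1 / p + 1 / q"
    and "\<alpha> > 0"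
    and "\<forall>B \<in> BB. bounded B"
    and "e_Besicovitch BB (\<lambda>s. s powr \<alpha>) (\<lambda>t. t powr (- real CARD('n) / p)) p Lam F1"
    and "e_Besicovitch BB (\<lambda>s. s powr \<alpha>) (\<lambda>t. t powr (- real CARD('n) / q)) q Lam F2"
  shows "e_Besicovitch BB (\<lambda>s. s powr \<alpha>) (\<lambda>t. t powr (- real CARD('n) / r)) r Lam
           (\<lambda>t x. scaleC (F1 t x) (F2 t x))"
proof -
  note F1 = assms(12)[unfolded e_Besicovitch_powr_iff]
    and F2 = assms(13)[unfolded e_Besicovitch_powr_iff]
  have "\<exists>P. (\<forall>k. trig_poly (P k)) \<and> (\<lambda>k. Besicovitch_seminorm r Lam B
      (\<lambda>x v. norm (scaleC (F1 v x) (F2 v x) - P k v x) powr \<alpha>)) \<longlonglongrightarrow> 0" if "B \<in> BB" for B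
  proof -
    obtain P1 P2 where "\<And>k. trig_poly (P1 k)" "\<And>k. trig_poly (P2 k)"
      and "(\<lambda>k. Besicovitch_seminorm p Lam B (\<lambda>x v. norm (F1 v x - P1 k v x) powr \<alpha>)) \<longlonglongrightarrow> 0"
      and "(\<lambda>k. Besicovitch_seminorm q Lam B (\<lambda>x v. norm (F2 v x - P2 k v x) powr \<alpha>)) \<longlonglongrightarrow> 0"
      using F1 F2 \<open>B \<in> BB\<close> by meson
    then show ?thesis
      using assms(1,6-11) F1 F2 \<open>B \<in> BB\<close>
      by (intro exI[of _ "\<lambda>k t x. scaleC (P1 k t x) (P2 k t x)"] conjI allI trig_poly_scaleC
          scaleC_approximation_tendsto_0) auto
  qed
  moreover have "(\<lambda>t. scaleC (F1 t x) (F2 t x)) \<in> borel_measurable (lebesgue_on Lam)" for x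
    using F1 F2 by (intro borel_measurable_scaleC) auto
  ultimately show ?thesis
    unfolding e_Besicovitch_powr_iff by blast
qed

end
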